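(* Let $f_0,f_1$ be finitely supported probability distributions on a connected, locally finite graph $G$, and endow $G$ with the $W_1$-orientation with respect to $(f_0,f_1)$. Then every oriented path on $(G,\to)$ is a geodesic of $G$.
   Context: $d$ is the graph distance. A path of length $n$ is a sequence $\gamma(0),\dots,\gamma(n)$ of vertices with consecutive ones adjacent; $L(\gamma)=n$, $e_0(\gamma)=\gamma(0)$, $e_1(\gamma)=\gamma(n)$; it is a geodesic if $n=d(\gamma(0),\gamma(n))$. A probability distribution is $f:G\to[0,\infty)$ with $\sum_xf(x)=1$. $\Pi_1(f_0,f_1)$ is the set of couplings $\pi$ of $f_0,f_1$ (nonnegative functions on $G\times G$ with marginals $f_0,f_1$) minimizing $\sum d(x,y)\pi(x,y)$; $\mathcal{C}(f_0,f_1)=\{(x,y):\pi(x,y)>0\text{ for some }\pi\in\Pi_1(f_0,f_1)\}$. The $W_1$-orientation with respect to $(f_0,f_1)$: for adjacent $x,y$, $x\to y$ iff there exist a geodesic $\gamma$ with $(e_0(\gamma),e_1(\gamma))\in\mathcal{C}(f_0,f_1)$ and $k\in\{0,\dots,L(\gamma)-1\}$ with $\gamma(k)=x,\gamma(k+1)=y$. An oriented path is a path with $\gamma(i)\to\gamma(i+1)$ for each $i$. *)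

theory Defs
  imports "HOL-Analysis.Analysis"
begin

text \<open>A graph: vertex set = the type 'a, adjacency relation E (symmetric, irreflexive).
  A path of length n is gamma 0, ..., gamma n with consecutive vertices adjacent.\<close>

definition is_path :: "('a \<Rightarrow> 'a \<Rightarrow> bool) \<Rightarrow> (nat \<Rightarrow> 'a) \<Rightarrow> nat \<Rightarrow> bool" where
  "is_path E \<gamma> n \<longleftrightarrow> (\<forall>i<n. E (\<gamma> i) (\<gamma> (Suc i)))"

definition graph_connected :: "('a \<Rightarrow> 'a \<Rightarrow> bool) \<Rightarrow> bool" where
  "graph_connected E \<longleftrightarrow> (\<forall>x y. \<exists>\<gamma> n. is_path E \<gamma> n \<and> \<gamma> 0 = x \<and> \<gamma> n = y)"

definition locally_finite :: "('a \<Rightarrow> 'a \<Rightarrow> bool) \<Rightarrow> bool" where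
  "locally_finite E \<longleftrightarrow> (\<forall>x. finite {y. E x y})"

definition simple_graph :: "('a \<Rightarrow> 'a \<Rightarrow> bool) \<Rightarrow> bool" where
  "simple_graph E \<longleftrightarrow> (\<forall>x y. E x y \<longleftrightarrow> E y x) \<and> (\<forall>x. \<not> E x x)"

definition gdist :: "('a \<Rightarrow> 'a \<Rightarrow> bool) \<Rightarrow> 'a \<Rightarrow> 'a \<Rightarrow> nat" where
  "gdist E x y = (LEAST n. \<exists>\<gamma>. is_path E \<gamma> n \<and> \<gamma> 0 = x \<and> \<gamma> n = y)"

definition is_geodesic :: "('a \<Rightarrow> 'a \<Rightarrow> bool) \<Rightarrow> (nat \<Rightarrow> 'a) \<Rightarrow> nat \<Rightarrow> bool" where
  "is_geodesic E \<gamma> n \<longleftrightarrow> is_path E \<gamma> n \<and> n = gdist E (\<gamma> 0) (\<gamma> n)"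

definition fin_prob_dist :: "('a \<Rightarrow> real) \<Rightarrow> bool" where
  "fin_prob_dist f \<longleftrightarrow> (\<forall>x. f x \<ge> 0) \<and> finite {x. f x \<noteq> 0}
      \<and> (\<Sum>x\<in>{x. f x \<noteq> 0}. f x) = 1"

definition coupling :: "('a \<Rightarrow> real) \<Rightarrow> ('a \<Rightarrow> real) \<Rightarrow> ('a \<Rightarrow> 'a \<Rightarrow> real) \<Rightarrow> bool" where
  "coupling f0 f1 \<pi> \<longleftrightarrow> (\<forall>x y. \<pi> x y \<ge> 0)
      \<and> (\<forall>x. ((\<lambda>y. \<pi> x y) has_sum f0 x) UNIV)
      \<and> (\<forall>y. ((\<lambda>x. \<pi> x y) has_sum f1 y) UNIV)"

definition transport_cost :: "('a \<Rightarrow> 'a \<Rightarrow> bool) \<Rightarrow> ('a \<Rightarrow> 'a \<Rightarrow> real) \<Rightarrow> real" where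
  "transport_cost E \<pi> = (\<Sum>\<^sub>\<infinity>(x, y)\<in>UNIV. real (gdist E x y) * \<pi> x y)"

definition optimal_couplings ::
  "('a \<Rightarrow> 'a \<Rightarrow> bool) \<Rightarrow> ('a \<Rightarrow> real) \<Rightarrow> ('a \<Rightarrow> real) \<Rightarrow> ('a \<Rightarrow> 'a \<Rightarrow> real) set" where
  "optimal_couplings E f0 f1 = {\<pi>. coupling f0 f1 \<pi> \<and>
      (\<forall>\<sigma>. coupling f0 f1 \<sigma> \<longrightarrow> transport_cost E \<pi> \<le> transport_cost E \<sigma>)}"

definition coupled_pairs :: "('a \<Rightarrow> 'a \<Rightarrow> bool) \<Rightarrow> ('a \<Rightarrow> real) \<Rightarrow> ('a \<Rightarrow> real) \<Rightarrow> ('a \<times> 'a) set" where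
  "coupled_pairs E f0 f1 = {(x, y). \<exists>\<pi>\<in>optimal_couplings E f0 f1. \<pi> x y > 0}"

definition W1_orient :: "('a \<Rightarrow> 'a \<Rightarrow> bool) \<Rightarrow> ('a \<Rightarrow> real) \<Rightarrow> ('a \<Rightarrow> real) \<Rightarrow> 'a \<Rightarrow> 'a \<Rightarrow> bool" where
  "W1_orient E f0 f1 x y \<longleftrightarrow> E x y \<and>
     (\<exists>\<gamma> n k. is_geodesic E \<gamma> n \<and> (\<gamma> 0, \<gamma> n) \<in> coupled_pairs E f0 f1
        \<and> k < n \<and> \<gamma> k = x \<and> \<gamma> (Suc k) = y)"

definition oriented_path :: "('a \<Rightarrow> 'a \<Rightarrow> bool) \<Rightarrow> ('a \<Rightarrow> real) \<Rightarrow> ('a \<Rightarrow> real) \<Rightarrow> (nat \<Rightarrow> 'a) \<Rightarrow> nat \<Rightarrow> bool" where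
  "oriented_path E f0 f1 \<gamma> n \<longleftrightarrow> is_path E \<gamma> n \<and> (\<forall>i<n. W1_orient E f0 f1 (\<gamma> i) (\<gamma> (Suc i)))"

end

theory Submission
  imports Defs
begin

text \<open>Suppose an oriented path \<open>\<gamma>\<close> of length \<open>n = m + 1\<close> had \<open>d(\<gamma> 0, \<gamma> n) < n\<close>.
  Each edge \<open>\<gamma> i \<rightarrow> \<gamma> (i + 1)\<close> lies on a geodesic between a coupled pair \<open>(x i, y i)\<close>, so
  \<open>d(x i, y i) \<ge> d(x i, \<gamma> i) + 1 + d(\<gamma> (i + 1), y i)\<close>, and averaging the optimal couplings
  witnessing these pairs yields one optimal coupling charging all of them. Optimal couplings are
  cyclically monotone: re-matching \<open>x (i + 1)\<close> with \<open>y i\<close> and \<open>x 0\<close> with \<open>y m\<close> cannot lower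
  the cost. But routing the re-matched pairs along \<open>\<gamma>\<close>, and taking the shortcut from \<open>\<gamma> 0\<close>
  to \<open>\<gamma> n\<close> once, makes them strictly cheaper by the triangle inequality.\<close>

lemma is_path_take: "is_path E \<gamma> n \<Longrightarrow> k \<le> n \<Longrightarrow> is_path E \<gamma> k"
  unfolding is_path_def by auto

lemma is_path_shift: "is_path E \<gamma> n \<Longrightarrow> k \<le> n \<Longrightarrow> is_path E (\<lambda>i. \<gamma> (i + k)) (n - k)"
  unfolding is_path_def by auto

lemma is_path_append:
  assumes "is_path E \<alpha> a" "is_path E \<beta> b" "\<alpha> a = \<beta> 0"
  shows "is_path E (\<lambda>i. if i \<le> a then \<alpha> i else \<beta> (i - a)) (a + b)"
  unfolding is_path_def
proof (intro allI impI)
  fix i assume "i < a + b"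
  then show "E (if i \<le> a then \<alpha> i else \<beta> (i - a)) (if Suc i \<le> a then \<alpha> (Suc i) else \<beta> (Suc i - a))"
    using assms unfolding is_path_def
    by (cases "i < a") (auto simp: Suc_diff_le not_less le_Suc_eq dest: spec[of _ "i - a"])
qed

lemma gdist_le_path_length: "is_path E \<gamma> n \<Longrightarrow> gdist E (\<gamma> 0) (\<gamma> n) \<le> n"
  unfolding gdist_def by (rule Least_le) blast

lemma gdist_realized:
  assumes "graph_connected E"
  obtains \<gamma> where "is_path E \<gamma> (gdist E x y)" "\<gamma> 0 = x" "\<gamma> (gdist E x y) = y"
proof -
  have "\<exists>\<gamma>. is_path E \<gamma> (gdist E x y) \<and> \<gamma> 0 = x \<and> \<gamma> (gdist E x y) = y"
    unfolding gdist_def by (rule LeastI_ex) (use assms in \<open>unfold graph_connected_def, blast\<close>)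
  then show thesis using that by blast
qed

lemma gdist_triangle:
  assumes "graph_connected E"
  shows "gdist E x z \<le> gdist E x y + gdist E y z"
proof -
  obtain \<alpha> where \<alpha>: "is_path E \<alpha> (gdist E x y)" "\<alpha> 0 = x" "\<alpha> (gdist E x y) = y"
    using gdist_realized[OF assms] .
  obtain \<beta> where \<beta>: "is_path E \<beta> (gdist E y z)" "\<beta> 0 = y" "\<beta> (gdist E y z) = z"
    using gdist_realized[OF assms] .
  from gdist_le_path_length[OF is_path_append[OF \<alpha>(1) \<beta>(1)]] show ?thesis
    using \<alpha> \<beta> by (simp split: if_splits)
qed

lemma is_geodesic_through_edge:
  assumes "is_geodesic E \<gamma> n" "k < n"
  shows "gdist E (\<gamma> 0) (\<gamma> k) + 1 + gdist E (\<gamma> (Suc k)) (\<gamma> n) \<le> gdist E (\<gamma> 0) (\<gamma> n)"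
proof -
  have path: "is_path E \<gamma> n" and len: "gdist E (\<gamma> 0) (\<gamma> n) = n"
    using assms(1) by (auto simp: is_geodesic_def)
  have "gdist E (\<gamma> 0) (\<gamma> k) \<le> k"
    using gdist_le_path_length[OF is_path_take[OF path]] assms(2) by simp
  moreover have "gdist E (\<gamma> (Suc k)) (\<gamma> n) \<le> n - Suc k"
    using gdist_le_path_length[OF is_path_shift[OF path, of "Suc k"]] assms(2) by simp
  ultimately show ?thesis using assms(2) len by linarith
qed

lemma W1_orient_through_coupled_pair:
  assumes "W1_orient E f0 f1 a b"
  shows "\<exists>x y. (x, y) \<in> coupled_pairs E f0 f1 \<and> gdist E x a + 1 + gdist E b y \<le> gdist E x y"
proof -
  obtain \<gamma> n k where \<gamma>: "is_geodesic E \<gamma> n" "(\<gamma> 0, \<gamma> n) \<in> coupled_pairs E f0 f1"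
    "k < n" "\<gamma> k = a" "\<gamma> (Suc k) = b"
    using assms unfolding W1_orient_def by blast
  then show ?thesis using is_geodesic_through_edge[OF \<gamma>(1,3)] by blast
qed

lemma cycle_shift_gdist_less:
  assumes "graph_connected E" "gdist E (p 0) (p (Suc m)) < Suc m"
    and "\<And>j. j < Suc m \<Longrightarrow> gdist E (x j) (p j) + 1 + gdist E (p (Suc j)) (y j) \<le> gdist E (x j) (y j)"
  shows "gdist E (x 0) (y m) + (\<Sum>j<m. gdist E (x (Suc j)) (y j)) < (\<Sum>j<Suc m. gdist E (x j) (y j))"
proof -
  define A where "A j = gdist E (x j) (p j)" for j
  define B where "B j = gdist E (p (Suc j)) (y j)" for j
  have "gdist E (x 0) (y m) \<le> A 0 + gdist E (p 0) (p (Suc m)) + B m"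
    using gdist_triangle[OF assms(1), of "x 0" "y m" "p 0"]
      gdist_triangle[OF assms(1), of "p 0" "y m" "p (Suc m)"]
    unfolding A_def B_def by linarith
  moreover have "gdist E (x (Suc j)) (y j) \<le> A (Suc j) + B j" for j
    unfolding A_def B_def by (rule gdist_triangle[OF assms(1)])
  ultimately have "gdist E (x 0) (y m) + (\<Sum>j<m. gdist E (x (Suc j)) (y j))
      \<le> A 0 + gdist E (p 0) (p (Suc m)) + B m + (\<Sum>j<m. A (Suc j) + B j)"
    by (intro add_mono sum_mono) auto
  also have "\<dots> = (\<Sum>j<Suc m. A j + B j) + gdist E (p 0) (p (Suc m))"
    unfolding sum.lessThan_Suc_shift[of A] sum.lessThan_Suc[of B] sum.distrib by simp
  also have "\<dots> < (\<Sum>j<Suc m. A j + B j) + Suc m"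
    using assms(2) by simp
  also have "\<dots> = (\<Sum>j<Suc m. A j + 1 + B j)"
    by (simp only: sum.distrib) simp
  also have "\<dots> \<le> (\<Sum>j<Suc m. gdist E (x j) (y j))"
    using assms(3) unfolding A_def B_def by (intro sum_mono) auto
  finally show ?thesis .
qed

lemma has_sum_sum:
  fixes f :: "'i \<Rightarrow> 'a \<Rightarrow> 'b::topological_comm_monoid_add"
  assumes "finite J" "\<And>j. j \<in> J \<Longrightarrow> (f j has_sum s j) A"
  shows "((\<lambda>x. \<Sum>j\<in>J. f j x) has_sum (\<Sum>j\<in>J. s j)) A"
  using assms by (induction J rule: finite_induct) (auto intro!: has_sum_add)

lemma has_sum_diff:
  fixes f g :: "'a \<Rightarrow> 'b::topological_ab_group_add"
  assumes "(f has_sum a) A" "(g has_sum b) A"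
  shows "((\<lambda>x. f x - g x) has_sum (a - b)) A"
  using has_sum_add[OF assms(1), of "\<lambda>x. - g x" "- b"] assms(2) by (simp add: has_sum_uminus)

lemma has_sum_of_bool_pair_row:
  "((\<lambda>v. of_bool (u = a \<and> v = b)) has_sum (of_bool (u = a) :: real)) UNIV"
  by (rule has_sum_finite_neutralI[of "{b}"]) auto

lemma has_sum_of_bool_pair_col:
  "((\<lambda>u. of_bool (u = a \<and> v = b)) has_sum (of_bool (v = b) :: real)) UNIV"
  by (rule has_sum_finite_neutralI[of "{a}"]) auto

lemma coupling_le_marginals:
  assumes "coupling f0 f1 \<pi>"
  shows "\<pi> u v \<le> f0 u" "\<pi> u v \<le> f1 v"
proof -
  have nonneg: "\<pi> x y \<ge> 0" for x y
    using assms by (simp add: coupling_def)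
  have single: "((\<lambda>w. if w = z then c else 0) has_sum c) UNIV" for z and c :: real
    by (rule has_sum_finite_neutralI[of "{z}"]) auto
  show "\<pi> u v \<le> f0 u"
    by (rule has_sum_mono_neutral[OF single[of v "\<pi> u v"]])
      (use assms nonneg in \<open>auto simp: coupling_def\<close>)
  show "\<pi> u v \<le> f1 v"
    by (rule has_sum_mono_neutral[OF single[of u "\<pi> u v"]])
      (use assms nonneg in \<open>auto simp: coupling_def\<close>)
qed

lemma coupling_support:
  assumes "coupling f0 f1 \<pi>" "\<pi> u v \<noteq> 0"
  shows "f0 u \<noteq> 0" "f1 v \<noteq> 0"
proof -
  have "\<pi> u v > 0" using assms by (metis coupling_def order_le_less)
  then show "f0 u \<noteq> 0" "f1 v \<noteq> 0"
    using coupling_le_marginals[OF assms(1), of u v] by auto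
qed

lemma transport_cost_eq_sum:
  assumes "coupling f0 f1 \<pi>" "finite {x. f0 x \<noteq> 0}" "finite {y. f1 y \<noteq> 0}"
  shows "transport_cost E \<pi> =
    (\<Sum>(u, v)\<in>{x. f0 x \<noteq> 0} \<times> {y. f1 y \<noteq> 0}. real (gdist E u v) * \<pi> u v)"
proof -
  have "transport_cost E \<pi> = (\<Sum>\<^sub>\<infinity>(u, v)\<in>{x. f0 x \<noteq> 0} \<times> {y. f1 y \<noteq> 0}. real (gdist E u v) * \<pi> u v)"
    unfolding transport_cost_def
    by (rule infsum_cong_neutral) (auto dest: coupling_support[OF assms(1)])
  then show ?thesis using assms(2,3) by simp
qed

lemma coupling_average:
  assumes "finite I" "I \<noteq> {}" "\<And>i. i \<in> I \<Longrightarrow> coupling f0 f1 (\<pi> i)"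
  shows "coupling f0 f1 (\<lambda>u v. (\<Sum>i\<in>I. \<pi> i u v) / card I)"
  unfolding coupling_def
proof (intro conjI allI)
  have card: "real (card I) > 0" using assms(1,2) by (simp add: card_gt_0_iff)
  fix u v
  show "0 \<le> (\<Sum>i\<in>I. \<pi> i u v) / card I"
    using assms(3) by (auto intro!: sum_nonneg divide_nonneg_nonneg simp: coupling_def)
  have "((\<lambda>v. \<Sum>i\<in>I. \<pi> i u v) has_sum (\<Sum>i\<in>I. f0 u)) UNIV"
    by (rule has_sum_sum) (use assms in \<open>auto simp: coupling_def\<close>)
  from has_sum_divide_const[OF this, of "card I"]
  show "((\<lambda>v. (\<Sum>i\<in>I. \<pi> i u v) / card I) has_sum f0 u) UNIV" using card by simp
  have "((\<lambda>u. \<Sum>i\<in>I. \<pi> i u v) has_sum (\<Sum>i\<in>I. f1 v)) UNIV"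
    by (rule has_sum_sum) (use assms in \<open>auto simp: coupling_def\<close>)
  from has_sum_divide_const[OF this, of "card I"]
  show "((\<lambda>u. (\<Sum>i\<in>I. \<pi> i u v) / card I) has_sum f1 v) UNIV" using card by simp
qed

lemma optimal_couplings_average:
  assumes "finite {x. f0 x \<noteq> 0}" "finite {y. f1 y \<noteq> 0}"
    and "finite I" "I \<noteq> {}" "\<And>i. i \<in> I \<Longrightarrow> \<pi> i \<in> optimal_couplings E f0 f1"
  shows "(\<lambda>u v. (\<Sum>i\<in>I. \<pi> i u v) / card I) \<in> optimal_couplings E f0 f1"
proof -
  define S where "S = {x. f0 x \<noteq> 0} \<times> {y. f1 y \<noteq> 0}"
  define P where "P = (\<lambda>u v. (\<Sum>i\<in>I. \<pi> i u v) / card I)"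
  obtain i0 where i0: "i0 \<in> I" using assms(4) by blast
  have cpl: "coupling f0 f1 (\<pi> i)" if "i \<in> I" for i
    using assms(5)[OF that] by (simp add: optimal_couplings_def)
  have cplP: "coupling f0 f1 P"
    unfolding P_def by (rule coupling_average[OF assms(3,4) cpl])
  have cost: "transport_cost E \<sigma> = (\<Sum>(u, v)\<in>S. real (gdist E u v) * \<sigma> u v)"
    if "coupling f0 f1 \<sigma>" for \<sigma>
    unfolding S_def by (rule transport_cost_eq_sum[OF that assms(1,2)])
  have same_cost: "transport_cost E (\<pi> i) = transport_cost E (\<pi> i0)" if "i \<in> I" for i
    using assms(5)[OF that] assms(5)[OF i0] cpl[OF that] cpl[OF i0]
    by (auto simp: optimal_couplings_def intro: order_antisym)
  have "transport_cost E P = (\<Sum>i\<in>I. \<Sum>(u, v)\<in>S. real (gdist E u v) * \<pi> i u v) / card I"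
    unfolding cost[OF cplP]
    by (simp add: P_def split_def sum_divide_distrib sum_distrib_left sum.swap[of _ S])
  also have "\<dots> = transport_cost E (\<pi> i0)"
    using same_cost assms(3,4) by (simp add: cost[OF cpl, symmetric])
  finally have "P \<in> optimal_couplings E f0 f1"
    using assms(5)[OF i0] cplP by (simp add: optimal_couplings_def)
  then show ?thesis by (simp only: P_def)
qed

lemma coupling_add_balanced:
  assumes "coupling f0 f1 \<pi>"
    and "\<And>u. ((\<lambda>v. \<Delta> u v) has_sum 0) UNIV" "\<And>v. ((\<lambda>u. \<Delta> u v) has_sum 0) UNIV"
    and "\<And>u v. 0 \<le> \<pi> u v + \<Delta> u v"
  shows "coupling f0 f1 (\<lambda>u v. \<pi> u v + \<Delta> u v)"
  unfolding coupling_def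
proof (intro conjI allI)
  fix u v
  show "0 \<le> \<pi> u v + \<Delta> u v" by (rule assms(4))
  show "((\<lambda>v. \<pi> u v + \<Delta> u v) has_sum f0 u) UNIV"
    using has_sum_add[OF _ assms(2)] assms(1) by (fastforce simp: coupling_def)
  show "((\<lambda>u. \<pi> u v + \<Delta> u v) has_sum f1 v) UNIV"
    using has_sum_add[OF _ assms(3)] assms(1) by (fastforce simp: coupling_def)
qed

text \<open>Moves a unit of mass from each pair \<open>(x j, y j)\<close> to \<open>(x (j + 1), y j)\<close>,
  indices taken modulo \<open>m + 1\<close>.\<close>
definition cycle_exchange :: "(nat \<Rightarrow> 'a) \<Rightarrow> (nat \<Rightarrow> 'a) \<Rightarrow> nat \<Rightarrow> 'a \<Rightarrow> 'a \<Rightarrow> real" where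
  "cycle_exchange x y m u v = of_bool (u = x 0 \<and> v = y m)
     + (\<Sum>j<m. of_bool (u = x (Suc j) \<and> v = y j)) - (\<Sum>j<Suc m. of_bool (u = x j \<and> v = y j))"

lemma cycle_exchange_row_sum: "((\<lambda>v. cycle_exchange x y m u v) has_sum 0) UNIV"
proof -
  have "((\<lambda>v. cycle_exchange x y m u v) has_sum (of_bool (u = x 0)
      + (\<Sum>j<m. of_bool (u = x (Suc j))) - (\<Sum>j<Suc m. of_bool (u = x j)))) UNIV"
    unfolding cycle_exchange_def
    by (intro has_sum_diff has_sum_add has_sum_sum has_sum_of_bool_pair_row) auto
  then show ?thesis by (simp only: sum.lessThan_Suc_shift) simp
qed

lemma cycle_exchange_col_sum: "((\<lambda>u. cycle_exchange x y m u v) has_sum 0) UNIV"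
proof -
  have "((\<lambda>u. cycle_exchange x y m u v) has_sum (of_bool (v = y m)
      + (\<Sum>j<m. of_bool (v = y j)) - (\<Sum>j<Suc m. of_bool (v = y j)))) UNIV"
    unfolding cycle_exchange_def
    by (intro has_sum_diff has_sum_add has_sum_sum has_sum_of_bool_pair_col) auto
  then show ?thesis by simp
qed

lemma cycle_exchange_perturbation_nonneg:
  fixes \<pi> :: "'a \<Rightarrow> 'a \<Rightarrow> real" and \<epsilon> :: real
  assumes "\<And>u v. 0 \<le> \<pi> u v" "0 \<le> \<epsilon>" "\<And>j. j < Suc m \<Longrightarrow> Suc m * \<epsilon> \<le> \<pi> (x j) (y j)"
  shows "0 \<le> \<pi> u v + \<epsilon> * cycle_exchange x y m u v"
proof -
  have "\<epsilon> * (\<Sum>j<Suc m. of_bool (u = x j \<and> v = y j)) \<le> \<pi> u v"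
  proof (cases "\<exists>j<Suc m. u = x j \<and> v = y j")
    case True
    then obtain j where "j < Suc m" "u = x j" "v = y j" by blast
    moreover have "(\<Sum>j<Suc m. of_bool (u = x j \<and> v = y j)) \<le> real (Suc m)"
      using sum_mono[of "{..<Suc m}" "\<lambda>j. of_bool (u = x j \<and> v = y j)" "\<lambda>_. 1 :: real"] by simp
    ultimately show ?thesis
      using assms(2) assms(3)[of j] by (smt (verit) mult_left_mono mult.commute)
  next
    case False
    then have "(\<Sum>j<Suc m. of_bool (u = x j \<and> v = y j) :: real) = 0"
      by (intro sum.neutral) auto
    then show ?thesis using assms(1) by simp
  qed
  moreover have "0 \<le> \<epsilon> * (of_bool (u = x 0 \<and> v = y m) + (\<Sum>j<m. of_bool (u = x (Suc j) \<and> v = y j)))"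
    using assms(2) by (intro mult_nonneg_nonneg add_nonneg_nonneg sum_nonneg) auto
  ultimately show ?thesis unfolding cycle_exchange_def by argo
qed

lemma sum_mult_cycle_exchange:
  assumes "finite A" "finite B" "\<And>j. j < Suc m \<Longrightarrow> x j \<in> A" "\<And>j. j < Suc m \<Longrightarrow> y j \<in> B"
  shows "(\<Sum>(u, v)\<in>A \<times> B. g u v * cycle_exchange x y m u v) =
    g (x 0) (y m) + (\<Sum>j<m. g (x (Suc j)) (y j)) - (\<Sum>j<Suc m. g (x j) (y j))"
proof -
  have pick: "(\<Sum>(u, v)\<in>A \<times> B. g u v * of_bool (u = a \<and> v = b)) = g a b"
    if "a \<in> A" "b \<in> B" for a b
  proof -
    have "(\<Sum>(u, v)\<in>A \<times> B. g u v * of_bool (u = a \<and> v = b))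
        = (\<Sum>p\<in>A \<times> B. if p = (a, b) then g a b else 0)"
      by (rule sum.cong) auto
    then show ?thesis using assms(1,2) that by simp
  qed
  have "(\<Sum>(u, v)\<in>A \<times> B. g u v * cycle_exchange x y m u v) =
      (\<Sum>(u, v)\<in>A \<times> B. g u v * of_bool (u = x 0 \<and> v = y m))
      + (\<Sum>j<m. \<Sum>(u, v)\<in>A \<times> B. g u v * of_bool (u = x (Suc j) \<and> v = y j))
      - (\<Sum>j<Suc m. \<Sum>(u, v)\<in>A \<times> B. g u v * of_bool (u = x j \<and> v = y j))"
    unfolding cycle_exchange_def
    by (simp only: split_def ring_distribs sum.distrib sum_subtractf sum_distrib_left
        sum.swap[of _ "A \<times> B"])
  also have "\<dots> = g (x 0) (y m) + (\<Sum>j<m. g (x (Suc j)) (y j)) - (\<Sum>j<Suc m. g (x j) (y j))"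
    using assms(3,4) by (simp add: pick)
  finally show ?thesis .
qed

lemma optimal_coupling_cyclically_monotone:
  assumes "finite {x. f0 x \<noteq> 0}" "finite {y. f1 y \<noteq> 0}"
    and "\<pi> \<in> optimal_couplings E f0 f1" "\<And>j. j < Suc m \<Longrightarrow> \<pi> (x j) (y j) > 0"
  shows "(\<Sum>j<Suc m. gdist E (x j) (y j)) \<le> gdist E (x 0) (y m) + (\<Sum>j<m. gdist E (x (Suc j)) (y j))"
proof -
  define \<Delta> where "\<Delta> = cycle_exchange x y m"
  define \<epsilon> where "\<epsilon> = Min ((\<lambda>j. \<pi> (x j) (y j)) ` {..<Suc m}) / Suc m"
  have cpl: "coupling f0 f1 \<pi>" and opt: "\<And>\<sigma>. coupling f0 f1 \<sigma> \<Longrightarrow> transport_cost E \<pi> \<le> transport_cost E \<sigma>"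
    using assms(3) by (auto simp: optimal_couplings_def)
  have "Min ((\<lambda>j. \<pi> (x j) (y j)) ` {..<Suc m}) > 0"
    using assms(4) by (subst Min_gr_iff) auto
  then have \<epsilon>_pos: "\<epsilon> > 0" by (simp add: \<epsilon>_def)
  have \<epsilon>_le: "Suc m * \<epsilon> \<le> \<pi> (x j) (y j)" if "j < Suc m" for j
    using that by (simp add: \<epsilon>_def)
  have "0 \<le> \<pi> u v + \<epsilon> * \<Delta> u v" for u v
    unfolding \<Delta>_def
    by (rule cycle_exchange_perturbation_nonneg) (use cpl \<epsilon>_pos \<epsilon>_le in \<open>auto simp: coupling_def\<close>)
  then have cpl': "coupling f0 f1 (\<lambda>u v. \<pi> u v + \<epsilon> * \<Delta> u v)"
    unfolding \<Delta>_def
    using has_sum_cmult_right[OF cycle_exchange_row_sum, of \<epsilon>]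
      has_sum_cmult_right[OF cycle_exchange_col_sum, of \<epsilon>]
    by (intro coupling_add_balanced[OF cpl]) auto
  have supp: "x j \<in> {x. f0 x \<noteq> 0}" "y j \<in> {y. f1 y \<noteq> 0}" if "j < Suc m" for j
    using coupling_support[OF cpl, of "x j" "y j"] assms(4)[OF that] by auto
  define S where "S = {x. f0 x \<noteq> 0} \<times> {y. f1 y \<noteq> 0}"
  define g where "g u v = real (gdist E u v)" for u v
  have "transport_cost E (\<lambda>u v. \<pi> u v + \<epsilon> * \<Delta> u v)
      = (\<Sum>(u, v)\<in>S. g u v * \<pi> u v) + \<epsilon> * (\<Sum>(u, v)\<in>S. g u v * \<Delta> u v)"
    unfolding transport_cost_eq_sum[OF cpl' assms(1,2)] S_def g_def
    by (simp add: split_def ring_distribs sum.distrib sum_distrib_left mult.left_commute)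
  also have "(\<Sum>(u, v)\<in>S. g u v * \<pi> u v) = transport_cost E \<pi>"
    unfolding transport_cost_eq_sum[OF cpl assms(1,2)] S_def g_def ..
  also have "(\<Sum>(u, v)\<in>S. g u v * \<Delta> u v)
      = g (x 0) (y m) + (\<Sum>j<m. g (x (Suc j)) (y j)) - (\<Sum>j<Suc m. g (x j) (y j))"
    unfolding S_def \<Delta>_def by (rule sum_mult_cycle_exchange[OF assms(1,2) supp])
  finally have "transport_cost E \<pi> \<le> transport_cost E \<pi>
      + \<epsilon> * (g (x 0) (y m) + (\<Sum>j<m. g (x (Suc j)) (y j)) - (\<Sum>j<Suc m. g (x j) (y j)))"
    using opt[OF cpl'] by simp
  then have "(\<Sum>j<Suc m. g (x j) (y j)) \<le> g (x 0) (y m) + (\<Sum>j<m. g (x (Suc j)) (y j))"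
    using \<epsilon>_pos by (simp add: zero_le_mult_iff)
  then show ?thesis unfolding g_def by (simp flip: of_nat_sum of_nat_add)
qed

lemma optimal_coupling_charging_pairs:
  assumes "finite {x. f0 x \<noteq> 0}" "finite {y. f1 y \<noteq> 0}" "finite J" "J \<noteq> {}"
    and "\<And>j. j \<in> J \<Longrightarrow> (x j, y j) \<in> coupled_pairs E f0 f1"
  obtains P where "P \<in> optimal_couplings E f0 f1" "\<And>j. j \<in> J \<Longrightarrow> P (x j) (y j) > 0"
proof -
  obtain \<pi> where \<pi>: "\<And>j. j \<in> J \<Longrightarrow> \<pi> j \<in> optimal_couplings E f0 f1 \<and> \<pi> j (x j) (y j) > 0"
    using assms(5) unfolding coupled_pairs_def by (simp add: Bex_def) metis
  define P where "P = (\<lambda>u v. (\<Sum>i\<in>J. \<pi> i u v) / card J)"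
  have "P \<in> optimal_couplings E f0 f1"
    unfolding P_def using \<pi> by (intro optimal_couplings_average[OF assms(1-4)]) blast
  moreover have "P (x j) (y j) > 0" if "j \<in> J" for j
  proof -
    have "(\<Sum>i\<in>J. \<pi> i (x j) (y j)) > 0"
      using \<pi> that assms(3) by (intro sum_pos2[of J j]) (auto simp: optimal_couplings_def coupling_def)
    moreover have "card J > 0" using that assms(3) card_gt_0_iff by blast
    ultimately show ?thesis by (simp add: P_def)
  qed
  ultimately show thesis by (rule that)
qed

theorem theorem2p13:
  fixes E :: "'a \<Rightarrow> 'a \<Rightarrow> bool" and f0 f1 :: "'a \<Rightarrow> real"
    and \<gamma> :: "nat \<Rightarrow> 'a" and n :: nat
  assumes "simple_graph E" and "graph_connected E" and "locally_finite E"
    and "fin_prob_dist f0" and "fin_prob_dist f1"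
    and "oriented_path E f0 f1 \<gamma> n"
  shows "is_geodesic E \<gamma> n"
proof -
  have path: "is_path E \<gamma> n" and orient: "\<And>i. i < n \<Longrightarrow> W1_orient E f0 f1 (\<gamma> i) (\<gamma> (Suc i))"
    using assms(6) by (auto simp: oriented_path_def)
  have fin: "finite {x. f0 x \<noteq> 0}" "finite {y. f1 y \<noteq> 0}"
    using assms(4,5) by (auto simp: fin_prob_dist_def)
  have "\<not> gdist E (\<gamma> 0) (\<gamma> n) < n"
  proof
    assume shortcut: "gdist E (\<gamma> 0) (\<gamma> n) < n"
    then obtain m where n: "n = Suc m" by (cases n) auto
    obtain x y where xy: "\<And>i. i < n \<Longrightarrow> (x i, y i) \<in> coupled_pairs E f0 f1
        \<and> gdist E (x i) (\<gamma> i) + 1 + gdist E (\<gamma> (Suc i)) (y i) \<le> gdist E (x i) (y i)"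
      using W1_orient_through_coupled_pair[OF orient] by metis
    obtain P where "P \<in> optimal_couplings E f0 f1" "\<And>j. j < Suc m \<Longrightarrow> P (x j) (y j) > 0"
      using optimal_coupling_charging_pairs[OF fin, where J="{..<n}" and x=x and y=y] xy n by auto
    from optimal_coupling_cyclically_monotone[OF fin this]
      cycle_shift_gdist_less[OF assms(2), of \<gamma> m x y] xy shortcut n
    show False by fastforce
  qed
  then show ?thesis
    using gdist_le_path_length[OF path] path by (simp add: is_geodesic_def)
qed

end
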